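(* Let $\mathbb C$ be a homological category with finite colimits, and let $w\colon W\to A$, $x\colon X\to A$, $y\colon Y\to A$ be morphisms in $\mathbb C$ with $w$ a monomorphism. If $m\colon (W+X)\times_W(W+Y)\to A$ is an internal multiplication $X\times Y\to A$ over $(W,w)$, then $m\circ\ker(\gamma_w)=0$.
   Context: A homological category is a regular pointed category in which the Split Short Five Lemma holds. Notation: $\iota_i$ are coproduct injections, $[a,b]$ copairing, $\langle a,b\rangle$ pairing, $1$, $0$ identity and zero morphisms. $(W+X)\times_W(W+Y)$ is the pullback of $[1,0]\colon W+X\to W$ and $[1,0]\colon W+Y\to W$, with projections $\pi_1,\pi_2$. An internal multiplication $X\times Y\to A$ over $(W,w)$ is a morphism $m\colon (W+X)\times_W(W+Y)\to A$ with $m\langle 1,\iota_1[1,0]\rangle=[w,x]$ and $m\langle \iota_1[1,0],1\rangle=[w,y]$. $A_3=A\times_{A/X}A\times_{A/Y}A$ is the limit of $A\xrightarrow{\mathsf{coker}(x)}A/X\xleftarrow{\mathsf{coker}(x)}A\xrightarrow{\mathsf{coker}(y)}A/Y\xleftarrow{\mathsf{coker}(y)}A$, and $\gamma_w=\langle [w,x]\pi_1,[w,0]\pi_1,[w,y]\pi_2\rangle\colon (W+X)\times_W(W+Y)\to A_3$. *)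

theory Defs
  imports Main
begin

record ('o,'a) cat =
  Ob   :: "'o set"
  Ar   :: "'a set"
  Dom  :: "'a \<Rightarrow> 'o"
  Cod  :: "'a \<Rightarrow> 'o"
  Comp :: "'a \<Rightarrow> 'a \<Rightarrow> 'a"   (* Comp C g f = g \<circ> f, defined when Cod f = Dom g *)
  Id   :: "'o \<Rightarrow> 'a"

definition hom :: "('o,'a) cat \<Rightarrow> 'o \<Rightarrow> 'o \<Rightarrow> 'a set" where
  "hom C a b = {f \<in> Ar C. Dom C f = a \<and> Cod C f = b}"

definition category :: "('o,'a) cat \<Rightarrow> bool" where
  "category C \<longleftrightarrow>
     (\<forall>f\<in>Ar C. Dom C f \<in> Ob C \<and> Cod C f \<in> Ob C) \<and>
     (\<forall>a\<in>Ob C. Id C a \<in> hom C a a) \<and>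
     (\<forall>f g. f \<in> Ar C \<and> g \<in> Ar C \<and> Cod C f = Dom C g \<longrightarrow>
            Comp C g f \<in> hom C (Dom C f) (Cod C g)) \<and>
     (\<forall>f\<in>Ar C. Comp C f (Id C (Dom C f)) = f \<and> Comp C (Id C (Cod C f)) f = f) \<and>
     (\<forall>f g h. f \<in> Ar C \<and> g \<in> Ar C \<and> h \<in> Ar C \<and> Cod C f = Dom C g \<and> Cod C g = Dom C h \<longrightarrow>
            Comp C h (Comp C g f) = Comp C (Comp C h g) f)"

definition iso :: "('o,'a) cat \<Rightarrow> 'a \<Rightarrow> bool" where
  "iso C f \<longleftrightarrow> f \<in> Ar C \<and> (\<exists>g\<in>hom C (Cod C f) (Dom C f).
       Comp C g f = Id C (Dom C f) \<and> Comp C f g = Id C (Cod C f))"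

definition mono :: "('o,'a) cat \<Rightarrow> 'a \<Rightarrow> bool" where
  "mono C f \<longleftrightarrow> f \<in> Ar C \<and> (\<forall>g h. g \<in> Ar C \<and> h \<in> Ar C \<and> Cod C g = Dom C f \<and>
       Cod C h = Dom C f \<and> Dom C g = Dom C h \<and> Comp C f g = Comp C f h \<longrightarrow> g = h)"

definition terminal :: "('o,'a) cat \<Rightarrow> 'o \<Rightarrow> bool" where
  "terminal C t \<longleftrightarrow> t \<in> Ob C \<and> (\<forall>a\<in>Ob C. \<exists>!f. f \<in> hom C a t)"

definition initial :: "('o,'a) cat \<Rightarrow> 'o \<Rightarrow> bool" where
  "initial C t \<longleftrightarrow> t \<in> Ob C \<and> (\<forall>a\<in>Ob C. \<exists>!f. f \<in> hom C t a)"

definition zero_obj :: "('o,'a) cat \<Rightarrow> 'o \<Rightarrow> bool" where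
  "zero_obj C z \<longleftrightarrow> initial C z \<and> terminal C z"

definition pointed :: "('o,'a) cat \<Rightarrow> bool" where
  "pointed C \<longleftrightarrow> category C \<and> (\<exists>z. zero_obj C z)"

definition zero_map :: "('o,'a) cat \<Rightarrow> 'a \<Rightarrow> bool" where
  "zero_map C f \<longleftrightarrow> f \<in> Ar C \<and> (\<exists>z g h. zero_obj C z \<and> g \<in> hom C (Dom C f) z \<and>
       h \<in> hom C z (Cod C f) \<and> f = Comp C h g)"

text \<open>The zero morphism a \<rightarrow> b (unique in a pointed category).\<close>
definition zero_ar :: "('o,'a) cat \<Rightarrow> 'o \<Rightarrow> 'o \<Rightarrow> 'a" where
  "zero_ar C a b = (THE f. f \<in> hom C a b \<and> zero_map C f)"

definition is_pullback :: "('o,'a) cat \<Rightarrow> 'a \<Rightarrow> 'a \<Rightarrow> 'o \<Rightarrow> 'a \<Rightarrow> 'a \<Rightarrow> bool" where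
  "is_pullback C f g P p1 p2 \<longleftrightarrow>
     f \<in> Ar C \<and> g \<in> Ar C \<and> Cod C f = Cod C g \<and> P \<in> Ob C \<and>
     p1 \<in> hom C P (Dom C f) \<and> p2 \<in> hom C P (Dom C g) \<and> Comp C f p1 = Comp C g p2 \<and>
     (\<forall>Q q1 q2. Q \<in> Ob C \<and> q1 \<in> hom C Q (Dom C f) \<and> q2 \<in> hom C Q (Dom C g) \<and>
        Comp C f q1 = Comp C g q2 \<longrightarrow>
        (\<exists>!u. u \<in> hom C Q P \<and> Comp C p1 u = q1 \<and> Comp C p2 u = q2))"

definition is_coproduct :: "('o,'a) cat \<Rightarrow> 'o \<Rightarrow> 'o \<Rightarrow> 'o \<Rightarrow> 'a \<Rightarrow> 'a \<Rightarrow> bool" where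
  "is_coproduct C a b S i1 i2 \<longleftrightarrow>
     a \<in> Ob C \<and> b \<in> Ob C \<and> S \<in> Ob C \<and> i1 \<in> hom C a S \<and> i2 \<in> hom C b S \<and>
     (\<forall>Q f g. Q \<in> Ob C \<and> f \<in> hom C a Q \<and> g \<in> hom C b Q \<longrightarrow>
        (\<exists>!h. h \<in> hom C S Q \<and> Comp C h i1 = f \<and> Comp C h i2 = g))"

definition is_coequalizer :: "('o,'a) cat \<Rightarrow> 'a \<Rightarrow> 'a \<Rightarrow> 'o \<Rightarrow> 'a \<Rightarrow> bool" where
  "is_coequalizer C f g E e \<longleftrightarrow>
     f \<in> Ar C \<and> g \<in> Ar C \<and> Dom C f = Dom C g \<and> Cod C f = Cod C g \<and> E \<in> Ob C \<and>
     e \<in> hom C (Cod C f) E \<and> Comp C e f = Comp C e g \<and>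
     (\<forall>Q q. Q \<in> Ob C \<and> q \<in> hom C (Cod C f) Q \<and> Comp C q f = Comp C q g \<longrightarrow>
        (\<exists>!u. u \<in> hom C E Q \<and> Comp C u e = q))"

definition is_kernel :: "('o,'a) cat \<Rightarrow> 'a \<Rightarrow> 'o \<Rightarrow> 'a \<Rightarrow> bool" where
  "is_kernel C f K k \<longleftrightarrow>
     f \<in> Ar C \<and> K \<in> Ob C \<and> k \<in> hom C K (Dom C f) \<and> zero_map C (Comp C f k) \<and>
     (\<forall>Q q. Q \<in> Ob C \<and> q \<in> hom C Q (Dom C f) \<and> zero_map C (Comp C f q) \<longrightarrow>
        (\<exists>!u. u \<in> hom C Q K \<and> Comp C k u = q))"

definition is_cokernel :: "('o,'a) cat \<Rightarrow> 'a \<Rightarrow> 'o \<Rightarrow> 'a \<Rightarrow> bool" where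
  "is_cokernel C f Q c \<longleftrightarrow>
     f \<in> Ar C \<and> Q \<in> Ob C \<and> c \<in> hom C (Cod C f) Q \<and> zero_map C (Comp C c f) \<and>
     (\<forall>R r. R \<in> Ob C \<and> r \<in> hom C (Cod C f) R \<and> zero_map C (Comp C r f) \<longrightarrow>
        (\<exists>!u. u \<in> hom C Q R \<and> Comp C u c = r))"

definition has_finite_limits :: "('o,'a) cat \<Rightarrow> bool" where
  "has_finite_limits C \<longleftrightarrow> (\<exists>t. terminal C t) \<and>
     (\<forall>f g. f \<in> Ar C \<and> g \<in> Ar C \<and> Cod C f = Cod C g \<longrightarrow> (\<exists>P p1 p2. is_pullback C f g P p1 p2))"

definition has_finite_colimits :: "('o,'a) cat \<Rightarrow> bool" where
  "has_finite_colimits C \<longleftrightarrow> (\<exists>i. initial C i) \<and>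
     (\<forall>a b. a \<in> Ob C \<and> b \<in> Ob C \<longrightarrow> (\<exists>S i1 i2. is_coproduct C a b S i1 i2)) \<and>
     (\<forall>f g. f \<in> Ar C \<and> g \<in> Ar C \<and> Dom C f = Dom C g \<and> Cod C f = Cod C g \<longrightarrow>
        (\<exists>E e. is_coequalizer C f g E e))"

definition regular_epi :: "('o,'a) cat \<Rightarrow> 'a \<Rightarrow> bool" where
  "regular_epi C e \<longleftrightarrow> (\<exists>f g. is_coequalizer C f g (Cod C e) e)"

definition regular :: "('o,'a) cat \<Rightarrow> bool" where
  "regular C \<longleftrightarrow> category C \<and> has_finite_limits C \<and>
     (\<forall>f P p1 p2. is_pullback C f f P p1 p2 \<longrightarrow> (\<exists>E e. is_coequalizer C p1 p2 E e)) \<and>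
     (\<forall>f g P p1 p2. is_pullback C f g P p1 p2 \<and> regular_epi C f \<longrightarrow> regular_epi C p2)"

definition split_short_five :: "('o,'a) cat \<Rightarrow> bool" where
  "split_short_five C \<longleftrightarrow>
     (\<forall>K A B k p s K' A' B' k' p' s' u v w.
        is_kernel C p K k \<and> p \<in> hom C A B \<and> s \<in> hom C B A \<and> Comp C p s = Id C B \<and>
        is_kernel C p' K' k' \<and> p' \<in> hom C A' B' \<and> s' \<in> hom C B' A' \<and> Comp C p' s' = Id C B' \<and>
        u \<in> hom C K K' \<and> v \<in> hom C A A' \<and> w \<in> hom C B B' \<and>
        Comp C v k = Comp C k' u \<and> Comp C p' v = Comp C w p \<and> Comp C v s = Comp C s' w \<and>
        iso C u \<and> iso C w \<longrightarrow> iso C v)"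

definition homological :: "('o,'a) cat \<Rightarrow> bool" where
  "homological C \<longleftrightarrow> regular C \<and> pointed C \<and> split_short_five C"

definition copair :: "('o,'a) cat \<Rightarrow> 'a \<Rightarrow> 'a \<Rightarrow> 'a \<Rightarrow> 'a \<Rightarrow> 'a" where
  "copair C i1 i2 f g = (THE h. h \<in> hom C (Cod C i1) (Cod C f) \<and> Comp C h i1 = f \<and> Comp C h i2 = g)"

definition pair :: "('o,'a) cat \<Rightarrow> 'a \<Rightarrow> 'a \<Rightarrow> 'a \<Rightarrow> 'a \<Rightarrow> 'a" where
  "pair C p1 p2 f g = (THE u. u \<in> hom C (Dom C f) (Dom C p1) \<and> Comp C p1 u = f \<and> Comp C p2 u = g)"

text \<open>A_3 = A \<times>_{A/X} A \<times>_{A/Y} A: limit of A -cx-> A/X <-cx- A -cy-> A/Y <-cy- A.\<close>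
definition is_A3 :: "('o,'a) cat \<Rightarrow> 'a \<Rightarrow> 'a \<Rightarrow> 'o \<Rightarrow> 'a \<Rightarrow> 'a \<Rightarrow> 'a \<Rightarrow> bool" where
  "is_A3 C cx cy L q1 q2 q3 \<longleftrightarrow>
     cx \<in> Ar C \<and> cy \<in> Ar C \<and> Dom C cx = Dom C cy \<and> L \<in> Ob C \<and>
     q1 \<in> hom C L (Dom C cx) \<and> q2 \<in> hom C L (Dom C cx) \<and> q3 \<in> hom C L (Dom C cx) \<and>
     Comp C cx q1 = Comp C cx q2 \<and> Comp C cy q2 = Comp C cy q3 \<and>
     (\<forall>Q r1 r2 r3. Q \<in> Ob C \<and> r1 \<in> hom C Q (Dom C cx) \<and> r2 \<in> hom C Q (Dom C cx) \<and>
        r3 \<in> hom C Q (Dom C cx) \<and> Comp C cx r1 = Comp C cx r2 \<and> Comp C cy r2 = Comp C cy r3 \<longrightarrow>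
        (\<exists>!u. u \<in> hom C Q L \<and> Comp C q1 u = r1 \<and> Comp C q2 u = r2 \<and> Comp C q3 u = r3))"

definition triple :: "('o,'a) cat \<Rightarrow> 'a \<Rightarrow> 'a \<Rightarrow> 'a \<Rightarrow> 'a \<Rightarrow> 'a \<Rightarrow> 'a \<Rightarrow> 'a" where
  "triple C q1 q2 q3 f g h = (THE u. u \<in> hom C (Dom C f) (Dom C q1) \<and>
       Comp C q1 u = f \<and> Comp C q2 u = g \<and> Comp C q3 u = h)"

text \<open>Data: coproducts (WX,i1,i2) = W+X and (WY,j1,j2) = W+Y, and the pullback
  (P,p1,p2) of [1,0] : W+X \<rightarrow> W and [1,0] : W+Y \<rightarrow> W.\<close>
definition internal_mult ::
  "('o,'a) cat \<Rightarrow> 'o \<Rightarrow> 'a \<Rightarrow> 'o \<Rightarrow> 'a \<Rightarrow> 'o \<Rightarrow> 'a \<Rightarrow> 'o \<Rightarrow> 'o \<Rightarrow> 'a \<Rightarrow> 'a \<Rightarrow> 'o \<Rightarrow> 'a \<Rightarrow> 'a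
   \<Rightarrow> 'o \<Rightarrow> 'a \<Rightarrow> 'a \<Rightarrow> 'a \<Rightarrow> bool" where
  "internal_mult C A w W x X y Y WX i1 i2 WY j1 j2 P p1 p2 m \<longleftrightarrow>
     m \<in> hom C P A \<and>
     Comp C m (pair C p1 p2 (Id C WX) (Comp C j1 (copair C i1 i2 (Id C W) (zero_ar C X W))))
       = copair C i1 i2 w x \<and>
     Comp C m (pair C p1 p2 (Comp C i1 (copair C j1 j2 (Id C W) (zero_ar C Y W))) (Id C WY))
       = copair C j1 j2 w y"

definition gamma ::
  "('o,'a) cat \<Rightarrow> 'o \<Rightarrow> 'a \<Rightarrow> 'o \<Rightarrow> 'a \<Rightarrow> 'o \<Rightarrow> 'a \<Rightarrow> 'a \<Rightarrow> 'a \<Rightarrow> 'a \<Rightarrow> 'a \<Rightarrow> 'a \<Rightarrow> 'a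
   \<Rightarrow> 'a \<Rightarrow> 'a \<Rightarrow> 'a \<Rightarrow> 'a" where
  "gamma C A w X x Y y i1 i2 j1 j2 p1 p2 q1 q2 q3 =
     triple C q1 q2 q3 (Comp C (copair C i1 i2 w x) p1)
                       (Comp C (copair C i1 i2 w (zero_ar C X A)) p1)
                       (Comp C (copair C j1 j2 w y) p2)"

end

theory Submission
  imports Defs
begin

text \<open>
  The kernel \<open>k : K \<rightarrow> P\<close> of \<open>\<gamma>\<^sub>w\<close> satisfies \<open>[w,x]\<pi>\<^sub>1k = 0\<close>, \<open>[w,y]\<pi>\<^sub>2k = 0\<close> and, since \<open>w\<close> is
  monic, \<open>[1,0]\<pi>\<^sub>1k = [1,0]\<pi>\<^sub>2k = 0\<close>. The internal multiplication restricts to \<open>[w,x]\<close> along the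
  section \<open>e\<^sub>X = \<langle>1,\<iota>\<^sub>1[1,0]\<rangle>\<close> of \<open>\<pi>\<^sub>1\<close> and to \<open>[w,y]\<close> along the section \<open>e\<^sub>Y = \<langle>\<iota>\<^sub>1[1,0],1\<rangle>\<close>
  of \<open>\<pi>\<^sub>2\<close>. The map \<open>e\<^sub>Y\<pi>\<^sub>2k\<close> is again killed by \<open>\<gamma>\<^sub>w\<close>, so it is \<open>kt\<close> for an idempotent \<open>t\<close>
  of \<open>K\<close>, which splits as \<open>t = br\<close>, \<open>rb = 1\<close>, with \<open>b = ker(\<pi>\<^sub>1k)\<close>. Along \<open>b\<close> the map \<open>k\<close> factors
  through \<open>e\<^sub>Y\<close>, and along \<open>ker r\<close> it factors through \<open>e\<^sub>X\<close>; on both, \<open>mk\<close> is therefore \<open>0\<close>.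
  By the split short five lemma the kernel and a section of the split epimorphism \<open>r\<close> are
  jointly strongly epic, hence \<open>mk = 0\<close>.
\<close>

locale homological_category =
  fixes C :: "('o,'a) cat"
  assumes homological: "homological C"
begin

abbreviation comp (infixr "\<cdot>" 55) where "g \<cdot> f \<equiv> Comp C g f"
abbreviation Z where "Z a b \<equiv> zero_ar C a b"

lemma category: "category C"
  using homological unfolding homological_def regular_def by auto

lemma homD: "f \<in> hom C a b \<Longrightarrow> f \<in> Ar C \<and> Dom C f = a \<and> Cod C f = b"
  by (simp add: hom_def)

lemma homI: "f \<in> Ar C \<Longrightarrow> Dom C f = a \<Longrightarrow> Cod C f = b \<Longrightarrow> f \<in> hom C a b"
  by (simp add: hom_def)

lemma dom_ob [simp]: "f \<in> Ar C \<Longrightarrow> Dom C f \<in> Ob C"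
  and cod_ob [simp]: "f \<in> Ar C \<Longrightarrow> Cod C f \<in> Ob C"
  using category unfolding category_def by auto

lemma hom_ob: "f \<in> hom C a b \<Longrightarrow> a \<in> Ob C" "f \<in> hom C a b \<Longrightarrow> b \<in> Ob C"
  using homD by force+

lemma comp_in_hom: "f \<in> Ar C \<Longrightarrow> g \<in> Ar C \<Longrightarrow> Cod C f = Dom C g \<Longrightarrow> g \<cdot> f \<in> hom C (Dom C f) (Cod C g)"
  using category unfolding category_def by auto

lemma comp_ar [simp]: "f \<in> Ar C \<Longrightarrow> g \<in> Ar C \<Longrightarrow> Cod C f = Dom C g \<Longrightarrow> g \<cdot> f \<in> Ar C"
  and comp_dom [simp]: "f \<in> Ar C \<Longrightarrow> g \<in> Ar C \<Longrightarrow> Cod C f = Dom C g \<Longrightarrow> Dom C (g \<cdot> f) = Dom C f"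
  and comp_cod [simp]: "f \<in> Ar C \<Longrightarrow> g \<in> Ar C \<Longrightarrow> Cod C f = Dom C g \<Longrightarrow> Cod C (g \<cdot> f) = Cod C g"
  using comp_in_hom homD by blast+

lemma comp_assoc [simp]:
  "f \<in> Ar C \<Longrightarrow> g \<in> Ar C \<Longrightarrow> h \<in> Ar C \<Longrightarrow> Cod C f = Dom C g \<Longrightarrow> Cod C g = Dom C h
   \<Longrightarrow> (h \<cdot> g) \<cdot> f = h \<cdot> (g \<cdot> f)"
  using category unfolding category_def by metis

lemma id_in_hom: "a \<in> Ob C \<Longrightarrow> Id C a \<in> hom C a a"
  using category unfolding category_def by auto

lemma id_ar [simp]: "a \<in> Ob C \<Longrightarrow> Id C a \<in> Ar C"
  and id_dom [simp]: "a \<in> Ob C \<Longrightarrow> Dom C (Id C a) = a"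
  and id_cod [simp]: "a \<in> Ob C \<Longrightarrow> Cod C (Id C a) = a"
  using id_in_hom homD by blast+

lemma comp_id_left [simp]: "f \<in> Ar C \<Longrightarrow> Cod C f = a \<Longrightarrow> Id C a \<cdot> f = f"
  and comp_id_right [simp]: "f \<in> Ar C \<Longrightarrow> Dom C f = a \<Longrightarrow> f \<cdot> Id C a = f"
  using category unfolding category_def by auto

lemma monoD:
  "mono C f \<Longrightarrow> g \<in> Ar C \<Longrightarrow> h \<in> Ar C \<Longrightarrow> Cod C g = Dom C f \<Longrightarrow> Cod C h = Dom C f
   \<Longrightarrow> Dom C g = Dom C h \<Longrightarrow> f \<cdot> g = f \<cdot> h \<Longrightarrow> g = h"
  unfolding mono_def by blast

section \<open>Zero morphisms\<close>

lemma zero_object_exists: "\<exists>z. zero_obj C z"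
  using homological unfolding homological_def pointed_def by auto

lemma zero_obj_ob: "zero_obj C z \<Longrightarrow> z \<in> Ob C"
  unfolding zero_obj_def initial_def by auto

lemma zero_obj_unique_to: "zero_obj C z \<Longrightarrow> a \<in> Ob C \<Longrightarrow> \<exists>!f. f \<in> hom C a z"
  and zero_obj_unique_from: "zero_obj C z \<Longrightarrow> a \<in> Ob C \<Longrightarrow> \<exists>!f. f \<in> hom C z a"
  unfolding zero_obj_def initial_def terminal_def by auto

lemma zero_map_eq:
  assumes f: "zero_map C f" and g: "zero_map C g"
    and "Dom C f = Dom C g" "Cod C f = Cod C g"
  shows "f = g"
proof -
  obtain z f1 f2 where z: "zero_obj C z" "f1 \<in> hom C (Dom C f) z" "f2 \<in> hom C z (Cod C f)" "f = f2 \<cdot> f1"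
    using f unfolding zero_map_def by blast
  obtain z' g1 g2 where z': "zero_obj C z'" "g1 \<in> hom C (Dom C f) z'" "g2 \<in> hom C z' (Cod C f)" "g = g2 \<cdot> g1"
    using g assms(3,4) unfolding zero_map_def by auto
  obtain u where u: "u \<in> hom C z z'"
    using zero_obj_unique_to[OF z'(1) zero_obj_ob[OF z(1)]] by blast
  have "u \<cdot> f1 = g1"
    using zero_obj_unique_to[OF z'(1) hom_ob(1)[OF z(2)]] u z(2) z'(2) comp_in_hom homD by metis
  moreover have "g2 \<cdot> u = f2"
    using zero_obj_unique_from[OF z(1) hom_ob(2)[OF z(3)]] u z(3) z'(3) comp_in_hom homD by metis
  ultimately have "g = g2 \<cdot> (u \<cdot> f1)" "(g2 \<cdot> u) \<cdot> f1 = f"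
    using z(4) z'(4) by simp_all
  then show ?thesis
    using u z(2,3) z'(3) homD by (metis comp_assoc)
qed

lemma zero_ar: assumes "a \<in> Ob C" "b \<in> Ob C" shows "Z a b \<in> hom C a b \<and> zero_map C (Z a b)"
proof -
  obtain z where z: "zero_obj C z" using zero_object_exists by blast
  obtain g h where g: "g \<in> hom C a z" and h: "h \<in> hom C z b"
    using zero_obj_unique_to[OF z assms(1)] zero_obj_unique_from[OF z assms(2)] by blast
  have hg: "h \<cdot> g \<in> hom C a b" using g h comp_in_hom homD by metis
  with g h z have "zero_map C (h \<cdot> g)" unfolding zero_map_def using homD by metis
  with hg have "\<exists>!f. f \<in> hom C a b \<and> zero_map C f"
    using zero_map_eq homD by metis
  then show ?thesis unfolding zero_ar_def by (rule theI')
qed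

lemma zero_ar_ar [simp]: "a \<in> Ob C \<Longrightarrow> b \<in> Ob C \<Longrightarrow> Z a b \<in> Ar C"
  and zero_ar_dom [simp]: "a \<in> Ob C \<Longrightarrow> b \<in> Ob C \<Longrightarrow> Dom C (Z a b) = a"
  and zero_ar_cod [simp]: "a \<in> Ob C \<Longrightarrow> b \<in> Ob C \<Longrightarrow> Cod C (Z a b) = b"
  using zero_ar homD by blast+

lemma zero_map_iff_eq_zero_ar:
  assumes "f \<in> hom C a b" shows "zero_map C f \<longleftrightarrow> f = Z a b"
proof -
  have "Z a b \<in> hom C a b" "zero_map C (Z a b)"
    using zero_ar hom_ob assms by blast+
  then show ?thesis
    using zero_map_eq[of f "Z a b"] assms homD by auto
qed

lemma zero_map_comp:
  assumes f: "zero_map C f" and g: "g \<in> Ar C" "Cod C f = Dom C g" and h: "h \<in> Ar C" "Cod C h = Dom C f"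
  shows "zero_map C (g \<cdot> f \<cdot> h)"
proof -
  obtain z f1 f2 where z: "zero_obj C z" "f1 \<in> hom C (Dom C f) z" "f2 \<in> hom C z (Cod C f)" "f = f2 \<cdot> f1"
    using f unfolding zero_map_def by blast
  have f1: "f1 \<in> Ar C" "Dom C f1 = Dom C f" "Cod C f1 = z"
    and f2: "f2 \<in> Ar C" "Dom C f2 = z" "Cod C f2 = Cod C f"
    using homD[OF z(2)] homD[OF z(3)] by auto
  have hf1: "Cod C h = Dom C f1" and f2g: "Cod C f2 = Dom C g"
    using f1 f2 g h by simp_all
  have "g \<cdot> f \<cdot> h = (g \<cdot> f2) \<cdot> (f1 \<cdot> h)"
    unfolding z(4) using g(1) h(1) f1(1,3) f2(1,2) hf1 f2g by simp
  moreover have "f1 \<cdot> h \<in> hom C (Dom C h) z" "g \<cdot> f2 \<in> hom C z (Cod C g)"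
    using g(1) h(1) f1(1,3) f2(1,2) hf1 f2g by (auto intro: homI)
  moreover have "g \<cdot> f \<cdot> h \<in> Ar C" "Dom C (g \<cdot> f \<cdot> h) = Dom C h" "Cod C (g \<cdot> f \<cdot> h) = Cod C g"
    using f g h unfolding zero_map_def by auto
  ultimately show ?thesis
    unfolding zero_map_def using z(1) by metis
qed

lemma zero_ar_comp_left [simp]:
  assumes "g \<in> Ar C" "Dom C g = b" "a \<in> Ob C"
  shows "g \<cdot> Z a b = Z a (Cod C g)"
proof -
  have b: "b \<in> Ob C" using assms by auto
  have "zero_map C (g \<cdot> Z a b \<cdot> Id C a)"
    using zero_map_comp[of "Z a b" g "Id C a"] zero_ar[OF assms(3) b] assms b by simp
  moreover have "g \<cdot> Z a b \<in> hom C a (Cod C g)"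
    using assms b by (simp add: homI)
  ultimately show ?thesis
    using assms b zero_map_iff_eq_zero_ar by simp
qed

lemma zero_ar_comp_right [simp]:
  assumes "f \<in> Ar C" "Cod C f = b" "c \<in> Ob C"
  shows "Z b c \<cdot> f = Z (Dom C f) c"
proof -
  have b: "b \<in> Ob C" using assms by auto
  have "zero_map C (Id C c \<cdot> Z b c \<cdot> f)"
    using zero_map_comp[of "Z b c" "Id C c" f] zero_ar[OF b assms(3)] assms b by simp
  moreover have "Z b c \<cdot> f \<in> hom C (Dom C f) c"
    using assms b by (simp add: homI)
  ultimately show ?thesis
    using assms b zero_map_iff_eq_zero_ar by simp
qed

section \<open>Coproducts, pullbacks, kernels\<close>

lemma coproduct_copair:
  assumes cp: "is_coproduct C a b S i1 i2" and f: "f \<in> hom C a Q" and g: "g \<in> hom C b Q"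
  shows "copair C i1 i2 f g \<in> hom C S Q" "copair C i1 i2 f g \<cdot> i1 = f" "copair C i1 i2 f g \<cdot> i2 = g"
proof -
  have "\<exists>!h. h \<in> hom C S Q \<and> h \<cdot> i1 = f \<and> h \<cdot> i2 = g"
    using cp f g hom_ob unfolding is_coproduct_def by blast
  moreover have "Cod C i1 = S" "Cod C f = Q"
    using cp f homD unfolding is_coproduct_def by auto
  ultimately show "copair C i1 i2 f g \<in> hom C S Q" "copair C i1 i2 f g \<cdot> i1 = f" "copair C i1 i2 f g \<cdot> i2 = g"
    unfolding copair_def using theI'[where P="\<lambda>h. h \<in> hom C S Q \<and> h \<cdot> i1 = f \<and> h \<cdot> i2 = g"] by simp_all
qed

lemma coproduct_eqI:
  assumes cp: "is_coproduct C a b S i1 i2" and "h \<in> hom C S Q" "h' \<in> hom C S Q"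
    and "h \<cdot> i1 = h' \<cdot> i1" "h \<cdot> i2 = h' \<cdot> i2"
  shows "h = h'"
proof -
  have "h \<cdot> i1 \<in> hom C a Q" "h \<cdot> i2 \<in> hom C b Q"
    using cp assms(2) comp_in_hom homD unfolding is_coproduct_def by metis+
  then have "\<exists>!u. u \<in> hom C S Q \<and> u \<cdot> i1 = h \<cdot> i1 \<and> u \<cdot> i2 = h \<cdot> i2"
    using cp hom_ob unfolding is_coproduct_def by blast
  then show ?thesis using assms(2-5) by metis
qed

lemma pullback_square:
  assumes "is_pullback C f g P p1 p2"
  shows "p1 \<in> hom C P (Dom C f)" "p2 \<in> hom C P (Dom C g)" "f \<cdot> p1 = g \<cdot> p2"
  using assms unfolding is_pullback_def by auto

lemma pullback_pair:
  assumes pb: "is_pullback C f g P p1 p2" and u1: "u1 \<in> hom C Q (Dom C f)" and u2: "u2 \<in> hom C Q (Dom C g)"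
    and eq: "f \<cdot> u1 = g \<cdot> u2"
  shows "pair C p1 p2 u1 u2 \<in> hom C Q P" "p1 \<cdot> pair C p1 p2 u1 u2 = u1" "p2 \<cdot> pair C p1 p2 u1 u2 = u2"
proof -
  have "\<exists>!u. u \<in> hom C Q P \<and> p1 \<cdot> u = u1 \<and> p2 \<cdot> u = u2"
    using pb u1 u2 eq hom_ob unfolding is_pullback_def by blast
  moreover have "Dom C u1 = Q" "Dom C p1 = P"
    using pb u1 homD unfolding is_pullback_def by auto
  ultimately show "pair C p1 p2 u1 u2 \<in> hom C Q P" "p1 \<cdot> pair C p1 p2 u1 u2 = u1" "p2 \<cdot> pair C p1 p2 u1 u2 = u2"
    unfolding pair_def using theI'[where P="\<lambda>u. u \<in> hom C Q P \<and> p1 \<cdot> u = u1 \<and> p2 \<cdot> u = u2"] by simp_all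
qed

lemma pullback_eqI:
  assumes pb: "is_pullback C f g P p1 p2" and h: "h \<in> hom C Q P" and "h' \<in> hom C Q P"
    and "p1 \<cdot> h = p1 \<cdot> h'" "p2 \<cdot> h = p2 \<cdot> h'"
  shows "h = h'"
proof -
  note sq = pullback_square[OF pb]
  have "p1 \<cdot> h \<in> hom C Q (Dom C f)" "p2 \<cdot> h \<in> hom C Q (Dom C g)"
    using sq(1,2) h comp_in_hom homD by metis+
  moreover have "f \<cdot> (p1 \<cdot> h) = g \<cdot> (p2 \<cdot> h)"
    using sq h homD pb unfolding is_pullback_def by (metis comp_assoc)
  ultimately have "\<exists>!u. u \<in> hom C Q P \<and> p1 \<cdot> u = p1 \<cdot> h \<and> p2 \<cdot> u = p2 \<cdot> h"
    using pb hom_ob unfolding is_pullback_def by blast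
  then show ?thesis using assms(2-5) by metis
qed

lemma A3_triple:
  assumes L: "is_A3 C cx cy L q1 q2 q3"
    and r: "r1 \<in> hom C Q (Dom C cx)" "r2 \<in> hom C Q (Dom C cx)" "r3 \<in> hom C Q (Dom C cx)"
    and e: "cx \<cdot> r1 = cx \<cdot> r2" "cy \<cdot> r2 = cy \<cdot> r3"
  shows "triple C q1 q2 q3 r1 r2 r3 \<in> hom C Q L" "q1 \<cdot> triple C q1 q2 q3 r1 r2 r3 = r1"
    "q2 \<cdot> triple C q1 q2 q3 r1 r2 r3 = r2" "q3 \<cdot> triple C q1 q2 q3 r1 r2 r3 = r3"
proof -
  have "\<exists>!u. u \<in> hom C Q L \<and> q1 \<cdot> u = r1 \<and> q2 \<cdot> u = r2 \<and> q3 \<cdot> u = r3"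
    using L r e hom_ob unfolding is_A3_def by blast
  moreover have "Dom C r1 = Q" "Dom C q1 = L"
    using L r homD unfolding is_A3_def by auto
  ultimately show "triple C q1 q2 q3 r1 r2 r3 \<in> hom C Q L" "q1 \<cdot> triple C q1 q2 q3 r1 r2 r3 = r1"
    "q2 \<cdot> triple C q1 q2 q3 r1 r2 r3 = r2" "q3 \<cdot> triple C q1 q2 q3 r1 r2 r3 = r3"
    unfolding triple_def
    using theI'[where P="\<lambda>u. u \<in> hom C Q L \<and> q1 \<cdot> u = r1 \<and> q2 \<cdot> u = r2 \<and> q3 \<cdot> u = r3"] by simp_all
qed

lemma A3_eqI:
  assumes L: "is_A3 C cx cy L q1 q2 q3" and h: "h \<in> hom C Q L" and "h' \<in> hom C Q L"
    and "q1 \<cdot> h = q1 \<cdot> h'" "q2 \<cdot> h = q2 \<cdot> h'" "q3 \<cdot> h = q3 \<cdot> h'"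
  shows "h = h'"
proof -
  have q: "q1 \<in> hom C L (Dom C cx)" "q2 \<in> hom C L (Dom C cx)" "q3 \<in> hom C L (Dom C cx)"
    and sq: "cx \<cdot> q1 = cx \<cdot> q2" "cy \<cdot> q2 = cy \<cdot> q3"
    and c: "cx \<in> Ar C" "cy \<in> Ar C" "Dom C cx = Dom C cy"
    using L unfolding is_A3_def by auto
  have "q1 \<cdot> h \<in> hom C Q (Dom C cx)" "q2 \<cdot> h \<in> hom C Q (Dom C cx)" "q3 \<cdot> h \<in> hom C Q (Dom C cx)"
    using q h comp_in_hom homD by metis+
  moreover have "cx \<cdot> (q1 \<cdot> h) = cx \<cdot> (q2 \<cdot> h)" "cy \<cdot> (q2 \<cdot> h) = cy \<cdot> (q3 \<cdot> h)"
    using q sq c h homD by (metis comp_assoc)+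
  ultimately have "\<exists>!u. u \<in> hom C Q L \<and> q1 \<cdot> u = q1 \<cdot> h \<and> q2 \<cdot> u = q2 \<cdot> h \<and> q3 \<cdot> u = q3 \<cdot> h"
    using L hom_ob unfolding is_A3_def by blast
  then show ?thesis using assms(2-6) by metis
qed

lemma kernel_zero_comp:
  assumes "is_kernel C f K k" "f \<in> hom C a b"
  shows "k \<in> hom C K a" "f \<cdot> k = Z K b"
proof -
  show k: "k \<in> hom C K a"
    using assms homD unfolding is_kernel_def by auto
  have "f \<cdot> k \<in> hom C K b" "zero_map C (f \<cdot> k)"
    using assms k comp_in_hom homD unfolding is_kernel_def by metis+
  then show "f \<cdot> k = Z K b"
    using zero_map_iff_eq_zero_ar by blast
qed

lemma cokernel_zero_comp:
  assumes "is_cokernel C f Q c" "f \<in> hom C a b"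
  shows "c \<in> hom C b Q" "c \<cdot> f = Z a Q"
proof -
  show c: "c \<in> hom C b Q"
    using assms homD unfolding is_cokernel_def by auto
  have "c \<cdot> f \<in> hom C a Q" "zero_map C (c \<cdot> f)"
    using assms c comp_in_hom homD unfolding is_cokernel_def by metis+
  then show "c \<cdot> f = Z a Q"
    using zero_map_iff_eq_zero_ar by blast
qed

lemma kernel_factor:
  assumes "is_kernel C f K k" "f \<in> hom C a b" "q \<in> hom C Q a" "f \<cdot> q = Z Q b"
  obtains u where "u \<in> hom C Q K" "k \<cdot> u = q"
proof -
  have "zero_map C (f \<cdot> q)"
    using assms(4) zero_ar hom_ob assms(2,3) by metis
  then show ?thesis
    using assms that hom_ob homD unfolding is_kernel_def by metis
qed

lemma kernel_cancel:
  assumes ker: "is_kernel C f K k" and g: "g \<in> hom C Q K" and "h \<in> hom C Q K" and "k \<cdot> g = k \<cdot> h"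
  shows "g = h"
proof -
  have k: "k \<in> hom C K (Dom C f)" and f: "f \<in> Ar C" "zero_map C (f \<cdot> k)"
    using ker unfolding is_kernel_def by auto
  have "k \<cdot> g \<in> hom C Q (Dom C f)"
    using k g comp_in_hom homD by metis
  moreover have "zero_map C (f \<cdot> (k \<cdot> g))"
    using zero_map_comp[of "f \<cdot> k" "Id C (Cod C f)" g] f k g homD by auto
  ultimately have "\<exists>!u. u \<in> hom C Q K \<and> k \<cdot> u = k \<cdot> g"
    using ker hom_ob unfolding is_kernel_def by blast
  then show ?thesis using assms(2-4) by metis
qed

lemma kernel_exists:
  assumes f: "f \<in> hom C a b"
  obtains K k where "is_kernel C f K k"
proof -
  obtain z where z: "zero_obj C z" using zero_object_exists by blast
  have ob: "a \<in> Ob C" "b \<in> Ob C" "z \<in> Ob C"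
    using f hom_ob zero_obj_ob[OF z] by auto
  have "has_finite_limits C"
    using homological unfolding homological_def regular_def by auto
  then obtain K k p where pb: "is_pullback C f (Z z b) K k p"
    using f ob homD unfolding has_finite_limits_def by fastforce
  have k: "k \<in> hom C K a" and p: "p \<in> hom C K z" and sq: "f \<cdot> k = Z z b \<cdot> p"
    using pullback_square[OF pb] f ob homD by auto
  have "is_kernel C f K k"
    unfolding is_kernel_def
  proof (intro conjI allI impI)
    show "f \<in> Ar C" "K \<in> Ob C" "k \<in> hom C K (Dom C f)"
      using f k homD hom_ob by auto
    show "zero_map C (f \<cdot> k)"
      using sq zero_ar[of K b] p ob homD hom_ob by auto
    fix Q q assume q: "Q \<in> Ob C \<and> q \<in> hom C Q (Dom C f) \<and> zero_map C (f \<cdot> q)"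
    then have "f \<cdot> q = Z Q b"
      using zero_map_iff_eq_zero_ar f comp_in_hom homD by metis
    also have "\<dots> = Z z b \<cdot> Z Q z"
      using q ob by simp
    finally obtain u where u: "u \<in> hom C Q K" "k \<cdot> u = q"
      using pullback_pair[OF pb, of q Q "Z Q z"] q zero_ar ob homD by auto
    show "\<exists>!u. u \<in> hom C Q K \<and> k \<cdot> u = q"
    proof (rule ex1I[of _ u])
      fix v assume v: "v \<in> hom C Q K \<and> k \<cdot> v = q"
      have "p \<cdot> v = p \<cdot> u"
        using zero_obj_unique_to[OF z] v u p comp_in_hom homD q by metis
      then show "v = u"
        using pullback_eqI[OF pb] u v by metis
    qed (use u in blast)
  qed
  then show ?thesis by (rule that)
qed

section \<open>Split extensions\<close>

lemma kernel_mono: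
  assumes "is_kernel C f K k" shows "mono C k"
  unfolding mono_def
proof (intro conjI allI impI)
  show "k \<in> Ar C" using assms homD unfolding is_kernel_def by auto
  fix g h assume "g \<in> Ar C \<and> h \<in> Ar C \<and> Cod C g = Dom C k \<and> Cod C h = Dom C k \<and> Dom C g = Dom C h \<and> k \<cdot> g = k \<cdot> h"
  then show "g = h"
    using kernel_cancel[OF assms, of g "Dom C g" h] assms homD homI unfolding is_kernel_def by metis
qed

lemma kernel_through_mono:
  assumes ker: "is_kernel C p K k" and n: "n \<in> hom C N A" "mono C n" and p: "p \<in> hom C A B"
    and a: "a \<in> hom C K N" "n \<cdot> a = k"
  shows "is_kernel C (p \<cdot> n) K a"
  unfolding is_kernel_def
proof (intro conjI allI impI)
  have k: "k \<in> hom C K A" "p \<cdot> k = Z K B"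
    using kernel_zero_comp[OF ker p] by auto
  note [simp] = homD[OF n(1)] homD[OF p] homD[OF a(1)]
  show "p \<cdot> n \<in> Ar C" "K \<in> Ob C" "a \<in> hom C K (Dom C (p \<cdot> n))"
    using a(1) hom_ob by simp_all
  have "(p \<cdot> n) \<cdot> a = Z K B"
    using a(2) k(2) by simp
  then show "zero_map C ((p \<cdot> n) \<cdot> a)"
    using zero_ar hom_ob a(1) p by metis
  fix Q q assume q: "Q \<in> Ob C \<and> q \<in> hom C Q (Dom C (p \<cdot> n)) \<and> zero_map C ((p \<cdot> n) \<cdot> q)"
  then have q': "q \<in> Ar C" "Dom C q = Q" "Cod C q = N"
    using homD by auto
  have "(p \<cdot> n) \<cdot> q = Z Q B"
    using q q' zero_map_iff_eq_zero_ar[of "(p \<cdot> n) \<cdot> q" Q B] by (simp add: homI)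
  then have "p \<cdot> (n \<cdot> q) = Z Q B"
    using q' by simp
  moreover have nq: "n \<cdot> q \<in> hom C Q A"
    using q' by (simp add: homI)
  ultimately obtain u where u: "u \<in> hom C Q K" "k \<cdot> u = n \<cdot> q"
    using kernel_factor[OF ker p] by blast
  note [simp] = homD[OF u(1)]
  have "n \<cdot> (a \<cdot> u) = n \<cdot> q"
    using u(2) a(2) by (simp flip: comp_assoc)
  then have au: "a \<cdot> u = q"
    using monoD[OF n(2), of "a \<cdot> u" q] q' by simp
  show "\<exists>!u. u \<in> hom C Q K \<and> a \<cdot> u = q"
  proof (rule ex1I[of _ u])
    fix v assume v: "v \<in> hom C Q K \<and> a \<cdot> v = q"
    then have "k \<cdot> v = n \<cdot> (a \<cdot> v)"
      unfolding a(2)[symmetric] using homD[of v Q K] by simp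
    then have "k \<cdot> v = k \<cdot> u"
      using u(2) v by simp
    then show "v = u" using kernel_cancel[OF ker] u v by blast
  qed (use u au in blast)
qed

lemma iso_id: "a \<in> Ob C \<Longrightarrow> iso C (Id C a)"
  unfolding iso_def using id_in_hom[of a] by (intro conjI bexI[of _ "Id C a"]) auto

lemma split_extension_jointly_strongly_epic:
  assumes p: "p \<in> hom C A B" and s: "s \<in> hom C B A" "p \<cdot> s = Id C B" and ker: "is_kernel C p K k"
    and n: "n \<in> hom C N A" "mono C n"
    and a: "a \<in> hom C K N" "n \<cdot> a = k" and c: "c \<in> hom C B N" "n \<cdot> c = s"
  shows "iso C n"
proof -
  have ob: "K \<in> Ob C" "B \<in> Ob C"
    using a c hom_ob by auto
  have k: "k \<in> hom C K A"
    using kernel_zero_comp(1)[OF ker p] .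
  have "split_short_five C"
    using homological unfolding homological_def by auto
  show "iso C n"
  proof (rule \<open>split_short_five C\<close>[unfolded split_short_five_def, rule_format, where p="p \<cdot> n" and K=K and k=a and A=N
        and B=B and s=c and p'=p and K'=K and k'=k and A'=A and B'=B and s'=s
        and u="Id C K" and v=n and w="Id C B"], intro conjI)
    show "is_kernel C (p \<cdot> n) K a"
      using kernel_through_mono[OF ker n p a] .
    show "p \<cdot> n \<in> hom C N B"
      using p n homD comp_in_hom by metis
    show "(p \<cdot> n) \<cdot> c = Id C B"
      using p n c s homD by (metis comp_assoc)
    show "n \<cdot> a = k \<cdot> Id C K" "n \<cdot> c = s \<cdot> Id C B"
      using a(2) c(2) homD[OF k] homD[OF s(1)] by simp_all
    show "p \<cdot> n = Id C B \<cdot> (p \<cdot> n)"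
      using homD[OF p] homD[OF n(1)] by simp
    show "Id C K \<in> hom C K K" "Id C B \<in> hom C B B" "iso C (Id C K)" "iso C (Id C B)"
      using ob id_in_hom iso_id by auto
  qed (fact p s ker n(1) c(1))+
qed

lemma zero_if_zero_on_split_extension:
  assumes p: "p \<in> hom C A B" and s: "s \<in> hom C B A" "p \<cdot> s = Id C B" and ker: "is_kernel C p K k"
    and f: "f \<in> hom C A D" and fk: "f \<cdot> k = Z K D" and fs: "f \<cdot> s = Z B D"
  shows "f = Z A D"
proof -
  obtain N n where kerf: "is_kernel C f N n" using kernel_exists[OF f] .
  have n: "n \<in> hom C N A" "f \<cdot> n = Z N D"
    using kernel_zero_comp[OF kerf f] by auto
  obtain a where "a \<in> hom C K N" "n \<cdot> a = k"
    using kernel_factor[OF kerf f _ fk] kernel_zero_comp(1)[OF ker p] .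
  moreover obtain c where "c \<in> hom C B N" "n \<cdot> c = s"
    using kernel_factor[OF kerf f s(1) fs] .
  ultimately have "iso C n"
    using split_extension_jointly_strongly_epic[OF p s ker n(1) kernel_mono[OF kerf]] by blast
  then obtain g where g: "g \<in> hom C A N" "n \<cdot> g = Id C A"
    using n homD unfolding iso_def by auto
  then have "f = (f \<cdot> n) \<cdot> g"
    using f n homD by (metis comp_assoc comp_id_right)
  then show ?thesis
    using n g f homD hom_ob by simp
qed

lemma kernel_splits_endomorphism:
  assumes ker: "is_kernel C f B b" and f: "f \<in> hom C K D" and t: "t \<in> hom C K K"
    and ft: "f \<cdot> t = Z K D" and tb: "t \<cdot> b = b"
  obtains r where "r \<in> hom C K B" "b \<cdot> r = t" "r \<cdot> b = Id C B"
proof -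
  obtain r where r: "r \<in> hom C K B" "b \<cdot> r = t"
    using kernel_factor[OF ker f t ft] .
  have b: "b \<in> hom C B K"
    using kernel_zero_comp(1)[OF ker f] .
  have "b \<cdot> (r \<cdot> b) = b \<cdot> Id C B"
    using r b tb homD by (metis comp_assoc comp_id_right)
  then have "r \<cdot> b = Id C B"
    using kernel_cancel[OF ker] r b homD comp_in_hom id_in_hom hom_ob by metis
  with r show ?thesis by (rule that)
qed

end

section \<open>Internal multiplications\<close>

locale internal_multiplication = homological_category C
  for C :: "('o,'a) cat" +
  fixes A W X Y WX WY P :: 'o and w x y i1 i2 j1 j2 p1 p2 m :: 'a
  assumes w: "w \<in> hom C W A" and x: "x \<in> hom C X A" and y: "y \<in> hom C Y A"
    and coproduct_WX: "is_coproduct C W X WX i1 i2" and coproduct_WY: "is_coproduct C W Y WY j1 j2"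
    and pullback: "is_pullback C (copair C i1 i2 (Id C W) (zero_ar C X W))
                       (copair C j1 j2 (Id C W) (zero_ar C Y W)) P p1 p2"
    and mult: "internal_mult C A w W x X y Y WX i1 i2 WY j1 j2 P p1 p2 m"
begin

abbreviation "rX \<equiv> copair C i1 i2 (Id C W) (Z X W)"
abbreviation "rY \<equiv> copair C j1 j2 (Id C W) (Z Y W)"
abbreviation "wx \<equiv> copair C i1 i2 w x"
abbreviation "wy \<equiv> copair C j1 j2 w y"
abbreviation "w0 \<equiv> copair C i1 i2 w (Z X A)"
abbreviation "eX \<equiv> pair C p1 p2 (Id C WX) (j1 \<cdot> rX)"
abbreviation "eY \<equiv> pair C p1 p2 (i1 \<cdot> rY) (Id C WY)"

lemma objects_in_Ob [simp]: "A \<in> Ob C" "W \<in> Ob C" "X \<in> Ob C" "Y \<in> Ob C" "WX \<in> Ob C" "WY \<in> Ob C" "P \<in> Ob C"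
  using w x y coproduct_WX coproduct_WY pullback hom_ob unfolding is_coproduct_def is_pullback_def
  by auto

lemma injections: "i1 \<in> hom C W WX" "i2 \<in> hom C X WX" "j1 \<in> hom C W WY" "j2 \<in> hom C Y WY"
  using coproduct_WX coproduct_WY unfolding is_coproduct_def by auto

lemma rX: "rX \<in> hom C WX W" "rX \<cdot> i1 = Id C W" "rX \<cdot> i2 = Z X W"
  using coproduct_copair[OF coproduct_WX id_in_hom zero_ar[THEN conjunct1]] by simp_all

lemma rY: "rY \<in> hom C WY W" "rY \<cdot> j1 = Id C W" "rY \<cdot> j2 = Z Y W"
  using coproduct_copair[OF coproduct_WY id_in_hom zero_ar[THEN conjunct1]] by simp_all

lemma wx: "wx \<in> hom C WX A" "wx \<cdot> i1 = w" "wx \<cdot> i2 = x"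
  and wy: "wy \<in> hom C WY A" "wy \<cdot> j1 = w" "wy \<cdot> j2 = y"
  and w0: "w0 \<in> hom C WX A" "w0 \<cdot> i1 = w" "w0 \<cdot> i2 = Z X A"
  using coproduct_copair[OF coproduct_WX w x] coproduct_copair[OF coproduct_WY w y]
    coproduct_copair[OF coproduct_WX w zero_ar[THEN conjunct1]] by simp_all

lemma projections: "p1 \<in> hom C P WX" "p2 \<in> hom C P WY"
  using pullback_square[OF pullback] rX(1) rY(1) homD by auto

lemma Ar_Dom_Cod [simp]:
  "w \<in> Ar C" "Dom C w = W" "Cod C w = A" "x \<in> Ar C" "Dom C x = X" "Cod C x = A"
  "y \<in> Ar C" "Dom C y = Y" "Cod C y = A"
  "i1 \<in> Ar C" "Dom C i1 = W" "Cod C i1 = WX" "i2 \<in> Ar C" "Dom C i2 = X" "Cod C i2 = WX"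
  "j1 \<in> Ar C" "Dom C j1 = W" "Cod C j1 = WY" "j2 \<in> Ar C" "Dom C j2 = Y" "Cod C j2 = WY"
  "rX \<in> Ar C" "Dom C rX = WX" "Cod C rX = W" "rY \<in> Ar C" "Dom C rY = WY" "Cod C rY = W"
  "wx \<in> Ar C" "Dom C wx = WX" "Cod C wx = A" "wy \<in> Ar C" "Dom C wy = WY" "Cod C wy = A"
  "w0 \<in> Ar C" "Dom C w0 = WX" "Cod C w0 = A"
  "p1 \<in> Ar C" "Dom C p1 = P" "Cod C p1 = WX" "p2 \<in> Ar C" "Dom C p2 = P" "Cod C p2 = WY"
  using w x y injections rX(1) rY(1) wx(1) wy(1) w0(1) projections homD by auto

lemma pullback_commutes: "rX \<cdot> p1 = rY \<cdot> p2"
  using pullback_square(3)[OF pullback] .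

lemma w0_eq: "w0 = w \<cdot> rX"
  by (rule coproduct_eqI[OF coproduct_WX w0(1)]) (simp_all add: homI w0 rX)

lemma eX: "eX \<in> hom C WX P" "p1 \<cdot> eX = Id C WX" "p2 \<cdot> eX = j1 \<cdot> rX"
proof -
  have "rX \<cdot> Id C WX = rY \<cdot> (j1 \<cdot> rX)"
    by (simp flip: comp_assoc add: rY)
  then show "eX \<in> hom C WX P" "p1 \<cdot> eX = Id C WX" "p2 \<cdot> eX = j1 \<cdot> rX"
    using pullback_pair[OF pullback, of "Id C WX" WX "j1 \<cdot> rX"] by (simp_all add: homI)
qed

lemma eY: "eY \<in> hom C WY P" "p1 \<cdot> eY = i1 \<cdot> rY" "p2 \<cdot> eY = Id C WY"
proof -
  have "rX \<cdot> (i1 \<cdot> rY) = rY \<cdot> Id C WY"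
    by (simp flip: comp_assoc add: rX)
  then show "eY \<in> hom C WY P" "p1 \<cdot> eY = i1 \<cdot> rY" "p2 \<cdot> eY = Id C WY"
    using pullback_pair[OF pullback, of "i1 \<cdot> rY" WY "Id C WY"] by (simp_all add: homI)
qed

lemma mult_sections: "m \<in> hom C P A" "m \<cdot> eX = wx" "m \<cdot> eY = wy"
  using mult unfolding internal_mult_def by auto

lemma Ar_Dom_Cod_sections [simp]:
  "eX \<in> Ar C" "Dom C eX = WX" "Cod C eX = P" "eY \<in> Ar C" "Dom C eY = WY" "Cod C eY = P"
  "m \<in> Ar C" "Dom C m = P" "Cod C m = A"
  using eX(1) eY(1) mult_sections(1) homD by auto

lemma factor_through_eX:
  assumes h: "h \<in> hom C Q P" and "p2 \<cdot> h = Z Q WY"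
  shows "h = eX \<cdot> (p1 \<cdot> h)"
proof (rule pullback_eqI[OF pullback h])
  note [simp] = homD[OF h] hom_ob(1)[OF h]
  show "eX \<cdot> (p1 \<cdot> h) \<in> hom C Q P"
    by (simp add: homI)
  have "p1 \<cdot> (eX \<cdot> (p1 \<cdot> h)) = (p1 \<cdot> eX) \<cdot> (p1 \<cdot> h)"
    by simp
  then show "p1 \<cdot> h = p1 \<cdot> (eX \<cdot> (p1 \<cdot> h))"
    by (simp add: eX)
  have "rX \<cdot> (p1 \<cdot> h) = rY \<cdot> (p2 \<cdot> h)"
    by (simp flip: comp_assoc add: pullback_commutes)
  then have "rX \<cdot> (p1 \<cdot> h) = Z Q W"
    using assms by simp
  moreover have "p2 \<cdot> (eX \<cdot> (p1 \<cdot> h)) = (p2 \<cdot> eX) \<cdot> (p1 \<cdot> h)"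
    by simp
  ultimately show "p2 \<cdot> h = p2 \<cdot> (eX \<cdot> (p1 \<cdot> h))"
    using assms by (simp add: eX)
qed

lemma factor_through_eY:
  assumes h: "h \<in> hom C Q P" and "p1 \<cdot> h = Z Q WX"
  shows "h = eY \<cdot> (p2 \<cdot> h)"
proof (rule pullback_eqI[OF pullback h])
  note [simp] = homD[OF h] hom_ob(1)[OF h]
  show "eY \<cdot> (p2 \<cdot> h) \<in> hom C Q P"
    by (simp add: homI)
  have "p2 \<cdot> (eY \<cdot> (p2 \<cdot> h)) = (p2 \<cdot> eY) \<cdot> (p2 \<cdot> h)"
    by simp
  then show "p2 \<cdot> h = p2 \<cdot> (eY \<cdot> (p2 \<cdot> h))"
    by (simp add: eY)
  have "rX \<cdot> (p1 \<cdot> h) = rY \<cdot> (p2 \<cdot> h)"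
    by (simp flip: comp_assoc add: pullback_commutes)
  then have "rY \<cdot> (p2 \<cdot> h) = Z Q W"
    using assms by simp
  moreover have "p1 \<cdot> (eY \<cdot> (p2 \<cdot> h)) = (p1 \<cdot> eY) \<cdot> (p2 \<cdot> h)"
    by simp
  ultimately show "p1 \<cdot> h = p1 \<cdot> (eY \<cdot> (p2 \<cdot> h))"
    using assms by (simp add: eY)
qed

lemma mult_on_X_part:
  assumes h: "h \<in> hom C Q P" and "p2 \<cdot> h = Z Q WY"
  shows "m \<cdot> h = wx \<cdot> (p1 \<cdot> h)"
proof -
  have "m \<cdot> h = m \<cdot> (eX \<cdot> (p1 \<cdot> h))"
    by (rule arg_cong[OF factor_through_eX[OF assms]])
  also have "\<dots> = wx \<cdot> (p1 \<cdot> h)"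
    using homD[OF h] by (simp flip: comp_assoc add: mult_sections)
  finally show ?thesis .
qed

lemma mult_on_Y_part:
  assumes h: "h \<in> hom C Q P" and "p1 \<cdot> h = Z Q WX"
  shows "m \<cdot> h = wy \<cdot> (p2 \<cdot> h)"
proof -
  have "m \<cdot> h = m \<cdot> (eY \<cdot> (p2 \<cdot> h))"
    by (rule arg_cong[OF factor_through_eY[OF assms]])
  also have "\<dots> = wy \<cdot> (p2 \<cdot> h)"
    using homD[OF h] by (simp flip: comp_assoc add: mult_sections)
  finally show ?thesis .
qed

end

locale kernel_of_gamma = internal_multiplication +
  fixes QX QY A3 K cx cy q1 q2 q3 k
  assumes mono_w: "mono C w"
    and cx: "cx \<in> hom C A QX" "cx \<cdot> x = zero_ar C X QX"
    and cy: "cy \<in> hom C A QY" "cy \<cdot> y = zero_ar C Y QY"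
    and A3: "is_A3 C cx cy A3 q1 q2 q3"
    and kernel: "is_kernel C (gamma C A w X x Y y i1 i2 j1 j2 p1 p2 q1 q2 q3) K k"
begin

abbreviation "\<gamma> \<equiv> gamma C A w X x Y y i1 i2 j1 j2 p1 p2 q1 q2 q3"

lemma gamma: "\<gamma> \<in> hom C P A3" "q1 \<cdot> \<gamma> = wx \<cdot> p1" "q2 \<cdot> \<gamma> = w0 \<cdot> p1" "q3 \<cdot> \<gamma> = wy \<cdot> p2"
proof -
  note [simp] = homD[OF cx(1)] homD[OF cy(1)] hom_ob(2)[OF cx(1)] hom_ob(2)[OF cy(1)]
  have "cx \<cdot> wx = cx \<cdot> w0"
    by (rule coproduct_eqI[OF coproduct_WX, of _ QX]) (simp_all add: homI wx w0 cx(2))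
  then have x_part: "cx \<cdot> (wx \<cdot> p1) = cx \<cdot> (w0 \<cdot> p1)"
    by (simp flip: comp_assoc)
  have "cy \<cdot> (w \<cdot> rY) = cy \<cdot> wy"
    by (rule coproduct_eqI[OF coproduct_WY, of _ QY]) (simp_all add: homI wy rY cy(2))
  moreover have "cy \<cdot> (w0 \<cdot> p1) = (cy \<cdot> (w \<cdot> rY)) \<cdot> p2"
    by (simp add: w0_eq pullback_commutes)
  ultimately have y_part: "cy \<cdot> (w0 \<cdot> p1) = cy \<cdot> (wy \<cdot> p2)"
    by simp
  have "wx \<cdot> p1 \<in> hom C P (Dom C cx)" "w0 \<cdot> p1 \<in> hom C P (Dom C cx)" "wy \<cdot> p2 \<in> hom C P (Dom C cx)"
    by (simp_all add: homI)
  from A3_triple[OF A3 this x_part y_part]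
  show "\<gamma> \<in> hom C P A3" "q1 \<cdot> \<gamma> = wx \<cdot> p1" "q2 \<cdot> \<gamma> = w0 \<cdot> p1" "q3 \<cdot> \<gamma> = wy \<cdot> p2"
    unfolding gamma_def by simp_all
qed

lemma kernel_gamma: "k \<in> hom C K P" "\<gamma> \<cdot> k = Z K A3"
  using kernel_zero_comp[OF kernel gamma(1)] .

lemma Ar_Dom_Cod_gamma [simp]:
  "\<gamma> \<in> Ar C" "Dom C \<gamma> = P" "Cod C \<gamma> = A3" "k \<in> Ar C" "Dom C k = K" "Cod C k = P"
  "A3 \<in> Ob C" "K \<in> Ob C"
  using gamma(1) kernel_gamma(1) homD hom_ob by auto

lemma gamma_comp_zero_iff:
  assumes h: "h \<in> hom C Q P"
  shows "\<gamma> \<cdot> h = Z Q A3 \<longleftrightarrow> wx \<cdot> (p1 \<cdot> h) = Z Q A \<and> rX \<cdot> (p1 \<cdot> h) = Z Q W \<and> wy \<cdot> (p2 \<cdot> h) = Z Q A"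
proof -
  note [simp] = homD[OF h] hom_ob(1)[OF h]
  have q: "q1 \<in> hom C A3 A" "q2 \<in> hom C A3 A" "q3 \<in> hom C A3 A"
    using A3 homD[OF cx(1)] unfolding is_A3_def by auto
  note [simp] = homD[OF q(1)] homD[OF q(2)] homD[OF q(3)]
  have comps: "q1 \<cdot> (\<gamma> \<cdot> h) = wx \<cdot> (p1 \<cdot> h)" "q2 \<cdot> (\<gamma> \<cdot> h) = w \<cdot> (rX \<cdot> (p1 \<cdot> h))"
    "q3 \<cdot> (\<gamma> \<cdot> h) = wy \<cdot> (p2 \<cdot> h)"
    by (simp_all flip: comp_assoc add: gamma w0_eq)
  show ?thesis
  proof
    assume "\<gamma> \<cdot> h = Z Q A3"
    then have "w \<cdot> (rX \<cdot> (p1 \<cdot> h)) = w \<cdot> Z Q W"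
      using comps(2) by simp
    then show "wx \<cdot> (p1 \<cdot> h) = Z Q A \<and> rX \<cdot> (p1 \<cdot> h) = Z Q W \<and> wy \<cdot> (p2 \<cdot> h) = Z Q A"
      using comps \<open>\<gamma> \<cdot> h = Z Q A3\<close> monoD[OF mono_w, of "rX \<cdot> (p1 \<cdot> h)" "Z Q W"] by simp
  next
    assume zero: "wx \<cdot> (p1 \<cdot> h) = Z Q A \<and> rX \<cdot> (p1 \<cdot> h) = Z Q W \<and> wy \<cdot> (p2 \<cdot> h) = Z Q A"
    show "\<gamma> \<cdot> h = Z Q A3"
      by (rule A3_eqI[OF A3, of _ Q]) (use zero comps in \<open>simp_all add: homI\<close>)
  qed
qed

lemma kernel_gamma_components:
  "wx \<cdot> (p1 \<cdot> k) = Z K A" "rX \<cdot> (p1 \<cdot> k) = Z K W" "rY \<cdot> (p2 \<cdot> k) = Z K W" "wy \<cdot> (p2 \<cdot> k) = Z K A"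
proof -
  show "wx \<cdot> (p1 \<cdot> k) = Z K A" "rX \<cdot> (p1 \<cdot> k) = Z K W" "wy \<cdot> (p2 \<cdot> k) = Z K A"
    using gamma_comp_zero_iff[OF kernel_gamma(1)] kernel_gamma(2) by auto
  moreover have "rX \<cdot> (p1 \<cdot> k) = rY \<cdot> (p2 \<cdot> k)"
    by (simp flip: comp_assoc add: pullback_commutes)
  ultimately show "rY \<cdot> (p2 \<cdot> k) = Z K W"
    by simp
qed

lemma kernel_gamma_endomorphism:
  obtains t where "t \<in> hom C K K" "k \<cdot> t = eY \<cdot> (p2 \<cdot> k)"
proof -
  have e: "eY \<cdot> (p2 \<cdot> k) \<in> hom C K P"
    by (simp add: homI)
  have "p1 \<cdot> (eY \<cdot> (p2 \<cdot> k)) = (p1 \<cdot> eY) \<cdot> (p2 \<cdot> k)" "p2 \<cdot> (eY \<cdot> (p2 \<cdot> k)) = (p2 \<cdot> eY) \<cdot> (p2 \<cdot> k)"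
    by simp_all
  then have "p1 \<cdot> (eY \<cdot> (p2 \<cdot> k)) = Z K WX" "p2 \<cdot> (eY \<cdot> (p2 \<cdot> k)) = p2 \<cdot> k"
    by (simp_all add: eY kernel_gamma_components)
  then have "\<gamma> \<cdot> (eY \<cdot> (p2 \<cdot> k)) = Z K A3"
    using gamma_comp_zero_iff[OF e] kernel_gamma_components by simp
  then show ?thesis
    using kernel_factor[OF kernel gamma(1) e] that by blast
qed

lemma mult_comp_kernel_gamma: "m \<cdot> k = Z K A"
proof -
  obtain t where t: "t \<in> hom C K K" "k \<cdot> t = eY \<cdot> (p2 \<cdot> k)"
    using kernel_gamma_endomorphism .
  have p1k: "p1 \<cdot> k \<in> hom C K WX"
    by (simp add: homI)
  obtain B b where ker_b: "is_kernel C (p1 \<cdot> k) B b"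
    using kernel_exists[OF p1k] .
  have b: "b \<in> hom C B K" "(p1 \<cdot> k) \<cdot> b = Z B WX"
    using kernel_zero_comp[OF ker_b p1k] .
  note [simp] = homD[OF t(1)] homD[OF b(1)] hom_ob(1)[OF b(1)]
  have kb: "k \<cdot> b \<in> hom C B P" "p1 \<cdot> (k \<cdot> b) = Z B WX"
    using b(2) by (simp_all add: homI)
  have "k \<cdot> (t \<cdot> b) = eY \<cdot> (p2 \<cdot> (k \<cdot> b))"
    using arg_cong[OF t(2), of "\<lambda>u. u \<cdot> b"] by simp
  also have "\<dots> = k \<cdot> b"
    using factor_through_eY[OF kb] by simp
  finally have tb: "t \<cdot> b = b"
    using kernel_cancel[OF kernel, of "t \<cdot> b" B b] by (simp add: homI b(1))
  have "(p1 \<cdot> k) \<cdot> t = (p1 \<cdot> eY) \<cdot> (p2 \<cdot> k)"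
    using arg_cong[OF t(2), of "\<lambda>u. p1 \<cdot> u"] by simp
  then have p1kt: "(p1 \<cdot> k) \<cdot> t = Z K WX"
    by (simp add: eY kernel_gamma_components)
  obtain r where r: "r \<in> hom C K B" "b \<cdot> r = t" "r \<cdot> b = Id C B"
    using kernel_splits_endomorphism[OF ker_b p1k t(1) p1kt tb] .
  obtain K' kq where ker_r: "is_kernel C r K' kq"
    using kernel_exists[OF r(1)] .
  have kq: "kq \<in> hom C K' K" "r \<cdot> kq = Z K' B"
    using kernel_zero_comp[OF ker_r r(1)] .
  note [simp] = homD[OF r(1)] homD[OF kq(1)] hom_ob(1)[OF kq(1)]
  have "p2 \<cdot> (k \<cdot> t) = p2 \<cdot> k"
    using arg_cong[OF t(2), of "\<lambda>u. p2 \<cdot> u"] by (simp flip: comp_assoc add: eY)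
  then have "p2 \<cdot> (k \<cdot> kq) = p2 \<cdot> (k \<cdot> (b \<cdot> (r \<cdot> kq)))"
    using arg_cong[OF r(2), of "\<lambda>u. p2 \<cdot> (k \<cdot> (u \<cdot> kq))"] by (simp flip: comp_assoc)
  then have "p2 \<cdot> (k \<cdot> kq) = Z K' WY"
    using kq(2) by simp
  then have "(m \<cdot> k) \<cdot> kq = Z K' A"
    using mult_on_X_part[of "k \<cdot> kq" K'] kernel_gamma_components by (simp add: homI flip: comp_assoc)
  moreover have "(m \<cdot> k) \<cdot> b = Z B A"
    using mult_on_Y_part[OF kb] kernel_gamma_components by (simp flip: comp_assoc)
  ultimately show ?thesis
    using zero_if_zero_on_split_extension[OF r(1) b(1) r(3) ker_r, of "m \<cdot> k" A] by (simp add: homI)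
qed
end

theorem lemma1p4:
  fixes C :: "('o,'a) cat"
  assumes "homological C" and "has_finite_colimits C"
    and "w \<in> hom C W A" and "x \<in> hom C X A" and "y \<in> hom C Y A" and "mono C w"
    and "is_coproduct C W X WX i1 i2" and "is_coproduct C W Y WY j1 j2"
    and "is_pullback C (copair C i1 i2 (Id C W) (zero_ar C X W))
                       (copair C j1 j2 (Id C W) (zero_ar C Y W)) P p1 p2"
    and "internal_mult C A w W x X y Y WX i1 i2 WY j1 j2 P p1 p2 m"
    and "is_cokernel C x QX cx" and "is_cokernel C y QY cy"
    and "is_A3 C cx cy A3 q1 q2 q3"
    and "is_kernel C (gamma C A w X x Y y i1 i2 j1 j2 p1 p2 q1 q2 q3) K k"
  shows "zero_map C (Comp C m k)"
proof -
  interpret homological_category C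
    by (rule homological_category.intro) fact
  interpret kernel_of_gamma C A W X Y WX WY P w x y i1 i2 j1 j2 p1 p2 m QX QY A3 K cx cy q1 q2 q3 k
    using assms cokernel_zero_comp by unfold_locales auto
  show ?thesis
    using mult_comp_kernel_gamma zero_ar by simp
qed

end
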